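(* Let $k\ge 2$ and $w=2^k-1$. Consider a line of $3w+2$ cells indexed $0,\dots,3w+1$ in which cells $0,\dots,w-1$ are empty, cells $w,\dots,2w-1$ are blocked, cells $2w,\dots,3w-1$ are empty, the frog is on cell $3w$, and cell $3w+1$ is empty (the line $E^wB^wE^wFE$). Let $\tilde Z$ be the sequence of jump lengths $$3w,\ \underbrace{1,\dots,1}_{w-1},\ w+1,\ \underbrace{1,\dots,1}_{w-1},\ 2.$$ Then the frog can perform $\tilde Z$ validly, and every valid execution of $\tilde Z$ visits every empty cell exactly once and ends with the frog on cell $3w+1$.
   Context: A frog on a line of cells performs a given sequence of positive jump lengths $J_1,J_2,\dots$; for each jump it chooses a direction, moving from position $p$ to $p+J_i$ or $p-J_i$. An execution is valid if every landing cell lies on the line, is not blocked, and has not been visited before (the starting cell counts as visited). *)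

theory Defs
  imports Main
begin

text \<open>An execution of the jump sequence J is recorded as the list ps of landing cells:
  ps!i is the cell reached after the (i+1)-th jump.\<close>

definition valid_exec :: "int set \<Rightarrow> int set \<Rightarrow> int \<Rightarrow> nat list \<Rightarrow> int list \<Rightarrow> bool" where
  "valid_exec line blocked s J ps \<longleftrightarrow>
     length ps = length J \<and>
     (\<forall>i < length J.
        ((s # ps) ! (Suc i) = (s # ps) ! i + int (J ! i) \<or>
         (s # ps) ! (Suc i) = (s # ps) ! i - int (J ! i)) \<and>
        ps ! i \<in> line \<and> ps ! i \<notin> blocked) \<and>
     distinct (s # ps)"

definition line_cells :: "nat \<Rightarrow> int set" where
  "line_cells w = {0 .. 3 * int w + 1}"

definition blocked_cells :: "nat \<Rightarrow> int set" where
  "blocked_cells w = {int w .. 2 * int w - 1}"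

definition empty_cells :: "nat \<Rightarrow> int set" where
  "empty_cells w = {0 .. int w - 1} \<union> {2 * int w .. 3 * int w - 1} \<union> {3 * int w + 1}"

definition frog_start :: "nat \<Rightarrow> int" where
  "frog_start w = 3 * int w"

definition Ztilde :: "nat \<Rightarrow> nat list" where
  "Ztilde w = [3 * w] @ replicate (w - 1) 1 @ [w + 1] @ replicate (w - 1) 1 @ [2]"

end

theory Submission
  imports Defs
begin

text \<open>At every jump one of the two candidate cells is off the line, blocked or already
  visited, so the execution is forced: the frog first lands on 0, walks right through
  the first empty block, jumps over the blocked block onto 2w, walks right through the
  second empty block and finally jumps over its own starting cell onto 3w + 1.  This path
  visits every empty cell once; the bound w \<ge> 3 makes the backward alternative of the last
  jump, 3w - 3, a cell of the second block that was already visited.\<close>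

lemma valid_exec_forced_unique:
  assumes valid: "valid_exec line blocked s J ps"
    and len: "length qs = length J"
    and forced: "\<And>i c. i < length J \<Longrightarrow>
        c = (s # qs) ! i + int (J ! i) \<or> c = (s # qs) ! i - int (J ! i) \<Longrightarrow>
        c \<in> line \<Longrightarrow> c \<notin> blocked \<Longrightarrow> c \<noteq> s \<Longrightarrow> (\<forall>j<i. c \<noteq> qs ! j) \<Longrightarrow> c = qs ! i"
  shows "ps = qs"
proof -
  have len_ps: "length ps = length J" and dist: "distinct (s # ps)"
    using valid by (simp_all add: valid_exec_def)
  have "ps ! i = qs ! i" if "i < length J" for i
    using that
  proof (induction i rule: less_induct)
    case (less i)
    have prev: "(s # ps) ! i = (s # qs) ! i"
      using less.IH less.prems by (cases i) auto
    have "ps ! i = (s # qs) ! i + int (J ! i) \<or> ps ! i = (s # qs) ! i - int (J ! i)"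
      and "ps ! i \<in> line" and "ps ! i \<notin> blocked"
      using valid less.prems prev by (auto simp: valid_exec_def)
    moreover have "ps ! i \<noteq> s"
      using dist less.prems len_ps by auto
    moreover have "\<forall>j<i. ps ! i \<noteq> qs ! j"
    proof (intro allI impI)
      fix j assume "j < i"
      then have "ps ! i \<noteq> ps ! j"
        using dist less.prems len_ps by (simp add: nth_eq_iff_index_eq)
      with \<open>j < i\<close> show "ps ! i \<noteq> qs ! j"
        using less.IH less.prems by simp
    qed
    ultimately show ?case
      by (rule forced[OF less.prems])
  qed
  then show ?thesis
    using len len_ps by (simp add: nth_equalityI)
qed

lemma Ztilde_length: "w \<ge> 1 \<Longrightarrow> length (Ztilde w) = 2 * w + 1"
  by (simp add: Ztilde_def)

lemma Ztilde_nth: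
  assumes "w \<ge> 1" "i < 2 * w + 1"
  shows "Ztilde w ! i = (if i = 0 then 3 * w else if i < w then 1 else if i = w then w + 1
                         else if i < 2 * w then 1 else 2)"
  using assms by (auto simp: Ztilde_def nth_append nth_Cons')

definition frog_path :: "nat \<Rightarrow> int list" where
  "frog_path w = map int [0..<w] @ map int [2 * w..<3 * w] @ [3 * int w + 1]"

lemma length_frog_path: "length (frog_path w) = 2 * w + 1"
  by (simp add: frog_path_def)

lemma frog_path_nth:
  "i < 2 * w + 1 \<Longrightarrow>
    frog_path w ! i = (if i < w then int i else if i < 2 * w then int w + int i else 3 * int w + 1)"
  by (auto simp: frog_path_def nth_append)

lemma frog_path_prev:
  "(frog_start w # frog_path w) ! i = (if i = 0 then 3 * int w else frog_path w ! (i - 1))"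
  by (simp add: frog_start_def nth_Cons')

lemma set_frog_path: "set (frog_path w) = empty_cells w"
proof -
  have "int ` {a..<b} = {int a .. int b - 1}" for a b
    by (auto simp: image_int_atLeastLessThan)
  then show ?thesis
    by (simp add: frog_path_def empty_cells_def Un_commute)
qed

lemma distinct_frog_path: "distinct (frog_start w # frog_path w)"
  by (auto simp: frog_path_def frog_start_def distinct_map inj_on_def)

lemma frog_path_step:
  assumes "w \<ge> 3" "i < 2 * w + 1"
  shows "frog_path w ! i = (frog_start w # frog_path w) ! i + int (Ztilde w ! i) \<or>
         frog_path w ! i = (frog_start w # frog_path w) ! i - int (Ztilde w ! i)"
  using assms by (auto simp: frog_path_prev frog_path_nth Ztilde_nth)

lemma frog_path_forced:
  assumes w: "w \<ge> 3" and i: "i < 2 * w + 1"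
    and c: "c = (frog_start w # frog_path w) ! i + int (Ztilde w ! i) \<or>
            c = (frog_start w # frog_path w) ! i - int (Ztilde w ! i)"
    and on_line: "c \<in> line_cells w" and free: "c \<notin> blocked_cells w"
    and unvisited: "\<forall>j<i. c \<noteq> frog_path w ! j"
  shows "c = frog_path w ! i"
proof -
  consider
      "i = 0 \<or> i = 1 \<or> i = w"
    | "i = w + 1"
    | "1 < i \<and> i < w \<or> w + 1 < i \<and> i < 2 * w"
    | "i = 2 * w"
    using i by linarith
  then show ?thesis
  proof cases
    case 1 \<comment> \<open>the backward, resp. forward, alternative leaves the line\<close>
    then show ?thesis
      using c on_line w by (auto simp: frog_path_prev frog_path_nth Ztilde_nth line_cells_def)
  next
    case 2 \<comment> \<open>the alternative 2w - 1 is blocked\<close>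
    then show ?thesis
      using c free w by (auto simp: frog_path_prev frog_path_nth Ztilde_nth blocked_cells_def)
  next
    case 3 \<comment> \<open>inside a block the alternative was visited two jumps earlier\<close>
    then have "frog_path w ! (i - 1) = frog_path w ! (i - 2) + 1"
      and "frog_path w ! i = frog_path w ! (i - 2) + 2"
      and "Ztilde w ! i = 1"
      using w by (auto simp: frog_path_nth Ztilde_nth)
    moreover have "c \<noteq> frog_path w ! (i - 2)"
    proof -
      have "i - 2 < i"
        using 3 by arith
      then show ?thesis
        using unvisited by blast
    qed
    ultimately show ?thesis
      using 3 c by (auto simp: frog_path_prev)
  next
    case 4
    then have "frog_path w ! (i - 1) = 3 * int w - 1"
      and "frog_path w ! (2 * w - 3) = 3 * int w - 3"
      and "frog_path w ! i = 3 * int w + 1"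
      and "Ztilde w ! i = 2"
      using w by (auto simp: frog_path_nth Ztilde_nth of_nat_diff)
    moreover have "c \<noteq> frog_path w ! (2 * w - 3)"
      using 4 unvisited w by simp
    ultimately show ?thesis
      using 4 c w by (auto simp: frog_path_prev)
  qed
qed

lemma frog_path_valid:
  assumes "w \<ge> 3"
  shows "valid_exec (line_cells w) (blocked_cells w) (frog_start w) (Ztilde w) (frog_path w)"
proof -
  have "set (frog_path w) \<subseteq> line_cells w - blocked_cells w"
    by (auto simp: set_frog_path empty_cells_def line_cells_def blocked_cells_def)
  moreover have "frog_path w ! i \<in> set (frog_path w)" if "i < 2 * w + 1" for i
    using that by (simp add: length_frog_path)
  ultimately have "frog_path w ! i \<in> line_cells w - blocked_cells w" if "i < 2 * w + 1" for i
    using that by blast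
  then show ?thesis
    using assms frog_path_step distinct_frog_path
    by (auto simp: valid_exec_def Ztilde_length length_frog_path)
qed

lemma valid_exec_eq_frog_path:
  assumes "w \<ge> 3"
    and "valid_exec (line_cells w) (blocked_cells w) (frog_start w) (Ztilde w) ps"
  shows "ps = frog_path w"
  using assms(2)
proof (rule valid_exec_forced_unique)
  show "length (frog_path w) = length (Ztilde w)"
    using assms(1) by (simp add: length_frog_path Ztilde_length)
qed (use assms(1) frog_path_forced Ztilde_length in auto)

theorem mainTheorem6:
  fixes k w :: nat
  assumes "k \<ge> 2" and "w = 2 ^ k - 1"
  shows "(\<exists>ps. valid_exec (line_cells w) (blocked_cells w) (frog_start w) (Ztilde w) ps) \<and>
         (\<forall>ps. valid_exec (line_cells w) (blocked_cells w) (frog_start w) (Ztilde w) ps \<longrightarrow>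
            (\<forall>c \<in> empty_cells w. length (filter (\<lambda>p. p = c) ps) = 1) \<and>
            last ps = 3 * int w + 1)"
proof -
  have "(2::nat) ^ 2 \<le> 2 ^ k"
    using assms(1) by (rule power_increasing) simp
  then have w: "w \<ge> 3"
    using assms(2) by simp
  have "length (filter (\<lambda>p. p = c) (frog_path w)) = 1" if "c \<in> empty_cells w" for c
  proof -
    have "{p. p = c} \<inter> set (frog_path w) = {c}"
      using that by (auto simp: set_frog_path)
    then show ?thesis
      using distinct_frog_path by (simp add: distinct_length_filter)
  qed
  moreover have "last (frog_path w) = 3 * int w + 1"
    by (simp add: frog_path_def)
  ultimately show ?thesis
    using frog_path_valid[OF w] valid_exec_eq_frog_path[OF w] by blast
qed

end
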